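(* For any $\beta>0$, $$\sum_{(m,n,p)\in\mathbb Z^3\setminus\{0\}} T(m,n,p)\,e^{-\beta R(m,n,p)}>0,$$ where $R(m,n,p)=m^2+n^2+p^2+mp+np$ and $T(m,n,p)=mn(m+p)(n+p)$. *)

theory Defs
  imports "HOL-Analysis.Analysis"
begin

definition R :: "int \<Rightarrow> int \<Rightarrow> int \<Rightarrow> int" where
  "R m n p = m^2 + n^2 + p^2 + m*p + n*p"

definition T :: "int \<Rightarrow> int \<Rightarrow> int \<Rightarrow> int" where
  "T m n p = m * n * (m + p) * (n + p)"

end

theory Submission
  imports Defs
begin

text \<open>With \<open>Q(m, p) = m\<^sup>2 + (m + p)\<^sup>2\<close> one has \<open>2 R(m, n, p) = Q(m, p) + Q(n, p)\<close> and
  \<open>T(m, n, p) = m(m + p) \<cdot> n(n + p)\<close>, so for fixed \<open>p\<close> the summand factors into a function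
  of \<open>m\<close> times the same function of \<open>n\<close>. Summing over \<open>m\<close> and \<open>n\<close> first therefore gives
  \<open>\<Sum>\<^sub>p F(p)\<^sup>2\<close> with \<open>F(p) = \<Sum>\<^sub>m m(m + p) exp(-\<beta> Q(m, p) / 2)\<close>, which is positive since
  \<open>F(0) = \<Sum>\<^sub>m m\<^sup>2 exp(-\<beta> m\<^sup>2) > 0\<close>. The regrouping is justified by absolute convergence, from the
  Gaussian majorant \<open>|m(m + p)| exp(-\<beta> Q(m, p) / 2) \<le> (8 / \<beta>) exp(-\<beta> (m\<^sup>2 + p\<^sup>2) / 8)\<close>.
  The origin contributes \<open>0\<close>, so removing it does not change the sum.\<close>

lemma has_sum_pos:
  fixes f :: "'a \<Rightarrow> real"
  assumes "(f has_sum s) A" "\<And>x. x \<in> A \<Longrightarrow> f x \<ge> 0" "a \<in> A" "f a > 0"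
  shows "s > 0"
  using has_sum_strict_mono_neutral[OF has_sum_empty assms(1), where x = a] assms(2-) by auto

lemma summable_on_real_comparison:
  fixes f g :: "'a \<Rightarrow> real"
  assumes "g summable_on A" "\<And>x. x \<in> A \<Longrightarrow> \<bar>f x\<bar> \<le> g x"
  shows "f summable_on A"
proof -
  have "(\<lambda>x. norm (g x)) summable_on A"
    using assms(1) summable_on_iff_abs_summable_on_real by blast
  then have "(\<lambda>x. norm (f x)) summable_on A"
    by (rule Infinite_Sum.abs_summable_on_comparison_test) (use assms(2) in force)
  then show ?thesis
    using summable_on_iff_abs_summable_on_real by blast
qed

lemma summable_on_product_nonneg:
  fixes f :: "'a \<Rightarrow> real" and g :: "'b \<Rightarrow> real"
  assumes "f summable_on A" "g summable_on B"
    and "\<And>x. x \<in> A \<Longrightarrow> f x \<ge> 0" "\<And>y. y \<in> B \<Longrightarrow> g y \<ge> 0"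
  shows "(\<lambda>(x, y). f x * g y) summable_on A \<times> B"
proof (rule summable_on_SigmaI)
  show "((\<lambda>y. (\<lambda>(x, y). f x * g y) (x, y)) has_sum f x * infsum g B) B" for x
    using has_sum_cmult_right[OF has_sum_infsum[OF assms(2)]] by simp
  show "(\<lambda>x. f x * infsum g B) summable_on A"
    using summable_on_cmult_left[OF assms(1)] .
qed (use assms in auto)

lemma has_sum_square_infsum_iff:
  fixes f :: "'a \<Rightarrow> 'b \<Rightarrow> real"
  assumes inner: "\<And>x. x \<in> A \<Longrightarrow> f x summable_on B"
    and total: "(\<lambda>(x, y, z). f x y * f x z) summable_on A \<times> (B \<times> B)"
  shows "((\<lambda>(x, y, z). f x y * f x z) has_sum s) (A \<times> (B \<times> B))
     \<longleftrightarrow> ((\<lambda>x. (\<Sum>\<^sub>\<infinity>y\<in>B. f x y)\<^sup>2) has_sum s) A"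
proof -
  define F where "F x = (\<Sum>\<^sub>\<infinity>y\<in>B. f x y)" for x
  have square: "((\<lambda>(y, z). f x y * f x z) has_sum (F x)\<^sup>2) (B \<times> B)" if "x \<in> A" for x
  proof (rule has_sum_SigmaI)
    show "((\<lambda>z. (\<lambda>(y, z). f x y * f x z) (y, z)) has_sum f x y * F x) B" for y
      using has_sum_cmult_right[OF has_sum_infsum[OF inner[OF that]]] by (simp add: F_def)
    show "((\<lambda>y. f x y * F x) has_sum (F x)\<^sup>2) B"
      using has_sum_cmult_left[OF has_sum_infsum[OF inner[OF that]]]
      by (simp add: F_def power2_eq_square)
    show "(\<lambda>(y, z). f x y * f x z) summable_on B \<times> B"
      using summable_on_SigmaD1[OF total that] by (simp add: case_prod_unfold)
  qed
  show ?thesis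
    unfolding F_def[symmetric]
  proof
    assume "((\<lambda>(x, y, z). f x y * f x z) has_sum s) (A \<times> (B \<times> B))"
    then show "((\<lambda>x. (F x)\<^sup>2) has_sum s) A"
      by (rule has_sum_Sigma') (use square in \<open>simp add: case_prod_unfold\<close>)
  next
    assume "((\<lambda>x. (F x)\<^sup>2) has_sum s) A"
    then show "((\<lambda>(x, y, z). f x y * f x z) has_sum s) (A \<times> (B \<times> B))"
      by (rule has_sum_SigmaI[rotated]) (use square total in \<open>simp_all add: case_prod_unfold\<close>)
  qed
qed

lemma summable_on_int_geometric:
  fixes r :: real
  assumes "0 \<le> r" "r < 1"
  shows "(\<lambda>k::int. r ^ nat \<bar>k\<bar>) summable_on UNIV"
proof -
  have geom: "(\<lambda>n::nat. r ^ n) summable_on UNIV"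
    using assms by (intro summable_nonneg_imp_summable_on summable_geometric) auto
  have "(\<lambda>k::int. r ^ nat \<bar>k\<bar>) summable_on f ` UNIV" if "inj f" "\<And>n. nat \<bar>f n\<bar> = n" for f :: "nat \<Rightarrow> int"
    using geom that by (subst summable_on_reindex) (auto simp: o_def)
  from this[of int] this[of "\<lambda>n. - int n"]
  have "(\<lambda>k::int. r ^ nat \<bar>k\<bar>) summable_on (range int \<union> range (\<lambda>n. - int n))"
    by (intro summable_on_union) (auto simp: inj_def)
  also have "range int \<union> range (\<lambda>n. - int n) = UNIV"
    by (auto intro: int_cases2)
  finally show ?thesis .
qed

lemma gaussian_summable:
  fixes \<gamma> :: real
  assumes "\<gamma> > 0"
  shows "(\<lambda>k::int. exp (- \<gamma> * of_int (k\<^sup>2))) summable_on UNIV"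
proof (rule summable_on_comparison_test[OF summable_on_int_geometric])
  fix k :: int
  have "\<bar>k\<bar> \<le> k\<^sup>2"
  proof (cases "k = 0")
    case False
    then have "\<bar>k\<bar> * 1 \<le> \<bar>k\<bar> * \<bar>k\<bar>"
      by (intro mult_left_mono) auto
    then show ?thesis
      by (simp add: power2_eq_square abs_mult[symmetric])
  qed simp
  then have "of_int \<bar>k\<bar> \<le> (of_int (k\<^sup>2) :: real)"
    by (simp only: of_int_le_iff)
  then have "exp (- \<gamma> * of_int (k\<^sup>2)) \<le> exp (- \<gamma> * of_int \<bar>k\<bar>)"
    using assms by simp
  also have "\<dots> = exp (- \<gamma>) ^ nat \<bar>k\<bar>"
    by (simp add: exp_of_nat_mult[symmetric] mult.commute)
  finally show "exp (- \<gamma> * of_int (k\<^sup>2)) \<le> exp (- \<gamma>) ^ nat \<bar>k\<bar>" .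
qed (use assms in auto)

lemma gaussian_weighted_product_bound:
  fixes x y \<beta> :: real
  assumes "\<beta> > 0"
  shows "\<bar>x * y\<bar> * exp (- \<beta> / 2 * (x\<^sup>2 + y\<^sup>2)) \<le> 8 / \<beta> * exp (- \<beta> / 8 * (x\<^sup>2 + (y - x)\<^sup>2))"
proof -
  define a where "a = x\<^sup>2 + y\<^sup>2"
  have "\<bar>x * y\<bar> \<le> a"
    using sum_squares_bound[of x y] sum_squares_bound[of x "- y"]
    by (auto simp: a_def abs_if algebra_simps)
  have "3 * a - (x\<^sup>2 + (y - x)\<^sup>2) = (x + y)\<^sup>2 + y\<^sup>2"
    by (simp add: a_def power2_eq_square algebra_simps)
  then have "x\<^sup>2 + (y - x)\<^sup>2 \<le> 3 * a"
    by (smt (verit) zero_le_power2)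
  have "a \<le> 8 / \<beta> * exp (\<beta> / 8 * a)"
    using exp_ge_add_one_self[of "\<beta> / 8 * a"] assms by (simp add: field_simps)
  have "\<bar>x * y\<bar> * exp (- \<beta> / 2 * a) \<le> a * exp (- \<beta> / 2 * a)"
    using \<open>\<bar>x * y\<bar> \<le> a\<close> by (intro mult_right_mono) auto
  also have "\<dots> \<le> 8 / \<beta> * exp (\<beta> / 8 * a) * exp (- \<beta> / 2 * a)"
    using \<open>a \<le> 8 / \<beta> * exp (\<beta> / 8 * a)\<close> by (intro mult_right_mono) auto
  also have "\<dots> = 8 / \<beta> * exp (- \<beta> / 8 * (3 * a))"
    by (simp add: mult.assoc exp_add[symmetric] field_simps)
  also have "\<dots> \<le> 8 / \<beta> * exp (- \<beta> / 8 * (x\<^sup>2 + (y - x)\<^sup>2))"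
    using \<open>x\<^sup>2 + (y - x)\<^sup>2 \<le> 3 * a\<close> assms by (intro mult_left_mono) auto
  finally show ?thesis
    by (simp add: a_def)
qed

definition half_summand :: "real \<Rightarrow> int \<Rightarrow> int \<Rightarrow> real" where
  "half_summand \<beta> p m = of_int (m * (m + p)) * exp (- \<beta> / 2 * of_int (m\<^sup>2 + (m + p)\<^sup>2))"

lemma summand_factorization:
  "of_int (T m n p) * exp (- \<beta> * of_int (R m n p)) = half_summand \<beta> p m * half_summand \<beta> p n"
proof -
  have "- \<beta> * of_int (R m n p) =
      - \<beta> / 2 * of_int (m\<^sup>2 + (m + p)\<^sup>2) + - \<beta> / 2 * of_int (n\<^sup>2 + (n + p)\<^sup>2)"
    by (simp add: R_def power2_eq_square algebra_simps)
  then have "exp (- \<beta> * of_int (R m n p)) =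
      exp (- \<beta> / 2 * of_int (m\<^sup>2 + (m + p)\<^sup>2)) * exp (- \<beta> / 2 * of_int (n\<^sup>2 + (n + p)\<^sup>2))"
    by (simp only: exp_add)
  then show ?thesis
    unfolding half_summand_def T_def of_int_mult by (simp only: mult_ac)
qed

lemma half_summand_bound:
  assumes "\<beta> > 0"
  shows "\<bar>half_summand \<beta> p m\<bar> \<le> 8 / \<beta> * exp (- (\<beta> / 8) * of_int (m\<^sup>2)) * exp (- (\<beta> / 8) * of_int (p\<^sup>2))"
proof -
  have "\<bar>half_summand \<beta> p m\<bar> =
      \<bar>of_int m * of_int (m + p)\<bar> * exp (- \<beta> / 2 * ((of_int m)\<^sup>2 + (of_int (m + p))\<^sup>2))"
    by (simp add: half_summand_def abs_mult)
  also have "\<dots> \<le> 8 / \<beta> * exp (- \<beta> / 8 * ((of_int m)\<^sup>2 + (of_int (m + p) - of_int m)\<^sup>2))"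
    by (rule gaussian_weighted_product_bound[OF assms])
  also have "\<dots> = 8 / \<beta> * exp (- (\<beta> / 8) * of_int (m\<^sup>2)) * exp (- (\<beta> / 8) * of_int (p\<^sup>2))"
    by (simp add: mult.assoc exp_add[symmetric] distrib_left)
  finally show ?thesis .
qed

lemma half_summand_summable:
  assumes "\<beta> > 0"
  shows "half_summand \<beta> p summable_on UNIV"
proof (rule summable_on_real_comparison[OF _ half_summand_bound[OF assms]])
  show "(\<lambda>m. 8 / \<beta> * exp (- (\<beta> / 8) * of_int (m\<^sup>2)) * exp (- (\<beta> / 8) * of_int (p\<^sup>2))) summable_on UNIV"
    using assms by (intro summable_on_cmult_left summable_on_cmult_right gaussian_summable) auto
qed

lemma half_summand_products_summable:
  assumes "\<beta> > 0"
  shows "(\<lambda>(p, m, n). half_summand \<beta> p m * half_summand \<beta> p n) summable_on UNIV"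
proof -
  define g where "g (\<gamma> :: real) k = exp (- \<gamma> * of_int (k\<^sup>2))" for \<gamma> and k :: int
  have g_summable: "g \<gamma> summable_on UNIV" if "\<gamma> > 0" for \<gamma>
    unfolding g_def using that by (rule gaussian_summable)
  have "(\<lambda>(m, n). g (\<beta> / 8) m * g (\<beta> / 8) n) summable_on UNIV \<times> UNIV"
    using assms by (intro summable_on_product_nonneg g_summable) (auto simp: g_def)
  then have "(\<lambda>(p, mn). g (\<beta> / 4) p * (\<lambda>(m, n). g (\<beta> / 8) m * g (\<beta> / 8) n) mn) summable_on UNIV \<times> UNIV"
    using assms by (intro summable_on_product_nonneg g_summable) (auto simp: g_def)
  then have majorant: "(\<lambda>(p, m, n). (8 / \<beta>)\<^sup>2 * (g (\<beta> / 4) p * (g (\<beta> / 8) m * g (\<beta> / 8) n))) summable_on UNIV"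
    by (auto simp: case_prod_unfold intro: summable_on_cmult_right)
  show ?thesis
  proof (rule summable_on_real_comparison[OF majorant], clarify)
    fix p m n :: int
    have "\<bar>half_summand \<beta> p m * half_summand \<beta> p n\<bar>
        \<le> (8 / \<beta> * g (\<beta> / 8) m * g (\<beta> / 8) p) * (8 / \<beta> * g (\<beta> / 8) n * g (\<beta> / 8) p)"
      unfolding abs_mult g_def using assms
      by (intro mult_mono half_summand_bound[OF assms]) auto
    also have "\<dots> = (8 / \<beta>)\<^sup>2 * (g (\<beta> / 4) p * (g (\<beta> / 8) m * g (\<beta> / 8) n))"
      by (simp add: g_def power2_eq_square mult_ac exp_add[symmetric])
    finally show "\<bar>half_summand \<beta> p m * half_summand \<beta> p n\<bar>
        \<le> (8 / \<beta>)\<^sup>2 * (g (\<beta> / 4) p * (g (\<beta> / 8) m * g (\<beta> / 8) n))" .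
  qed
qed

lemma half_summand_infsum_at_0_pos:
  assumes "\<beta> > 0"
  shows "(\<Sum>\<^sub>\<infinity>m. half_summand \<beta> 0 m) > 0"
  by (rule has_sum_pos[OF has_sum_infsum[OF half_summand_summable[OF assms]], where a = 1])
     (auto simp: half_summand_def)

theorem lemma5p2:
  fixes \<beta> :: real
  assumes "\<beta> > 0"
  shows "(\<lambda>(m, n, p). real_of_int (T m n p) * exp (- \<beta> * real_of_int (R m n p)))
            summable_on (UNIV - {(0, 0, 0)})
       \<and> (\<Sum>\<^sub>\<infinity>(m, n, p)\<in>UNIV - {(0::int, 0::int, 0::int)}.
            real_of_int (T m n p) * exp (- \<beta> * real_of_int (R m n p))) > 0"
proof -
  define f where "f = (\<lambda>(m, n, p). real_of_int (T m n p) * exp (- \<beta> * real_of_int (R m n p)))"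
  define g where "g = (\<lambda>(p, m, n). half_summand \<beta> p m * half_summand \<beta> p n)"
  define S where "S = infsum g UNIV"
  have "(g has_sum S) UNIV"
    unfolding S_def g_def using half_summand_products_summable[OF assms] by (rule has_sum_infsum)
  then have "((\<lambda>p. (\<Sum>\<^sub>\<infinity>m. half_summand \<beta> p m)\<^sup>2) has_sum S) UNIV"
    using has_sum_square_infsum_iff[of UNIV "half_summand \<beta>" UNIV S]
      half_summand_summable[OF assms] half_summand_products_summable[OF assms]
    by (simp add: g_def)
  then have "S > 0"
    by (rule has_sum_pos[where a = 0]) (use half_summand_infsum_at_0_pos[OF assms] in auto)
  have "(f has_sum S) UNIV"
    using \<open>(g has_sum S) UNIV\<close>
    by (subst has_sum_reindex_bij_witness[where j = "\<lambda>(m, n, p). (p, m, n)" and i = "\<lambda>(p, m, n). (m, n, p)"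
          and T = UNIV and h = g and s' = S]) (auto simp: f_def g_def summand_factorization[simplified])
  moreover have "(f has_sum 0) {(0, 0, 0)}"
    by (rule has_sum_finiteI) (simp_all add: f_def T_def)
  ultimately have "(f has_sum S) (UNIV - {(0, 0, 0)})"
    using has_sum_Diff by fastforce
  then show ?thesis
    using \<open>S > 0\<close> unfolding f_def[symmetric] by (metis has_sum_imp_summable infsumI)
qed

end
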